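(* Let $M$ be a $3$-connected simple matroid with $r(M)\ge 3$, and let $C^*$ be a cocircuit of $M$ of rank $3$. If $C^*$ contains two elements that are not vertically contractible in $M$, then all the elements of $C^*$ that are not vertically contractible in $M$ lie in a common non-trivial line of $M$. Moreover, $C^*$ contains a vertically contractible element of $M$.
   Context: An element $x$ is vertically contractible in $M$ if $\mathrm{si}(M/x)$, the simplification of $M/x$, is $3$-connected. A non-trivial line is a rank-$2$ flat with at least three elements. *)

theory Defs
  imports Main
begin

definition matroid :: "'a set \<Rightarrow> ('a set \<Rightarrow> nat) \<Rightarrow> bool" where
  "matroid E r \<longleftrightarrow> finite E
     \<and> (\<forall>X. X \<subseteq> E \<longrightarrow> r X \<le> card X)
     \<and> (\<forall>X Y. X \<subseteq> Y \<and> Y \<subseteq> E \<longrightarrow> r X \<le> r Y)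
     \<and> (\<forall>X Y. X \<subseteq> E \<and> Y \<subseteq> E \<longrightarrow> r (X \<union> Y) + r (X \<inter> Y) \<le> r X + r Y)"

definition loop :: "'a set \<Rightarrow> ('a set \<Rightarrow> nat) \<Rightarrow> 'a \<Rightarrow> bool" where
  "loop E r x \<longleftrightarrow> x \<in> E \<and> r {x} = 0"

definition simple :: "'a set \<Rightarrow> ('a set \<Rightarrow> nat) \<Rightarrow> bool" where
  "simple E r \<longleftrightarrow> (\<forall>x\<in>E. r {x} = 1) \<and> (\<forall>x\<in>E. \<forall>y\<in>E. x \<noteq> y \<longrightarrow> r {x, y} = 2)"

definition k_separation :: "'a set \<Rightarrow> ('a set \<Rightarrow> nat) \<Rightarrow> nat \<Rightarrow> 'a set \<Rightarrow> bool" where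
  "k_separation E r k X \<longleftrightarrow> X \<subseteq> E \<and> card X \<ge> k \<and> card (E - X) \<ge> k
     \<and> r X + r (E - X) < r E + k"

definition three_connected :: "'a set \<Rightarrow> ('a set \<Rightarrow> nat) \<Rightarrow> bool" where
  "three_connected E r \<longleftrightarrow> (\<forall>k X. 1 \<le> k \<and> k < 3 \<longrightarrow> \<not> k_separation E r k X)"

definition indep :: "'a set \<Rightarrow> ('a set \<Rightarrow> nat) \<Rightarrow> 'a set \<Rightarrow> bool" where
  "indep E r X \<longleftrightarrow> X \<subseteq> E \<and> r X = card X"

definition circuit :: "'a set \<Rightarrow> ('a set \<Rightarrow> nat) \<Rightarrow> 'a set \<Rightarrow> bool" where
  "circuit E r C \<longleftrightarrow> C \<subseteq> E \<and> \<not> indep E r C \<and> (\<forall>D. D \<subset> C \<longrightarrow> indep E r D)"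

definition dual_rank :: "'a set \<Rightarrow> ('a set \<Rightarrow> nat) \<Rightarrow> 'a set \<Rightarrow> nat" where
  "dual_rank E r X = card X + r (E - X) - r E"

definition cocircuit :: "'a set \<Rightarrow> ('a set \<Rightarrow> nat) \<Rightarrow> 'a set \<Rightarrow> bool" where
  "cocircuit E r C \<longleftrightarrow> circuit E (dual_rank E r) C"

definition flat :: "'a set \<Rightarrow> ('a set \<Rightarrow> nat) \<Rightarrow> 'a set \<Rightarrow> bool" where
  "flat E r F \<longleftrightarrow> F \<subseteq> E \<and> (\<forall>e \<in> E - F. r (insert e F) > r F)"

definition nontrivial_line :: "'a set \<Rightarrow> ('a set \<Rightarrow> nat) \<Rightarrow> 'a set \<Rightarrow> bool" where
  "nontrivial_line E r L \<longleftrightarrow> flat E r L \<and> r L = 2 \<and> card L \<ge> 3"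

definition contract_rank :: "('a set \<Rightarrow> nat) \<Rightarrow> 'a \<Rightarrow> 'a set \<Rightarrow> nat" where
  "contract_rank r x X = r (insert x X) - r {x}"

text \<open>Simplification: the restriction of M to a set S containing exactly one
  element from each parallel class of non-loops (S chosen by choice; the
  result is unique up to isomorphism).\<close>
definition simp_set :: "'a set \<Rightarrow> ('a set \<Rightarrow> nat) \<Rightarrow> 'a set" where
  "simp_set E r = (SOME S. S \<subseteq> E \<and> (\<forall>x\<in>S. r {x} = 1)
      \<and> (\<forall>x\<in>S. \<forall>y\<in>S. x \<noteq> y \<longrightarrow> r {x, y} = 2)
      \<and> (\<forall>x\<in>E. r {x} = 1 \<longrightarrow> (\<exists>y\<in>S. r {x, y} = 1)))"

definition vert_contractible :: "'a set \<Rightarrow> ('a set \<Rightarrow> nat) \<Rightarrow> 'a \<Rightarrow> bool" where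
  "vert_contractible E r x \<longleftrightarrow> x \<in> E \<and>
     three_connected (simp_set (E - {x}) (contract_rank r x)) (contract_rank r x)"

end

(*
  Call x bad if si(M/x) is not 3-connected. Lifting a small separation of si(M/x) shows that
  a bad x has a vertical 3-separation (A - {x}, {x}, B - {x}). For x in the rank-3 cocircuit C
  with complementary hyperplane H, 3-connectivity forces each of A, B to meet C in a line
  through x. So any bad y in C lies on a line with x and a third element, coming from C itself
  unless C = {x, y, z} is a triangle; in that case, uncrossing the separations of x and y
  within H yields a point of H on the line xy. Three bad elements of C in general position
  would force C to be such a triangle, and then the three points of H on its sides, together
  with the separations, leave too few elements for r E >= 4. Hence the bad elements of C are
  collinear, and since r C = 3 not all of C is bad.
*)

theory Submission
  imports Defs
begin

section \<open>Rank functions and simple matroids\<close>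

locale rank_matroid =
  fixes E :: "'a set" and r :: "'a set \<Rightarrow> nat"
  assumes matroid: "matroid E r"
begin

lemma finite_ground: "finite E"
  using matroid unfolding matroid_def by blast

lemma finite_subset_ground: "X \<subseteq> E \<Longrightarrow> finite X"
  using finite_ground finite_subset by blast

lemma rank_le_card: "X \<subseteq> E \<Longrightarrow> r X \<le> card X"
  using matroid unfolding matroid_def by blast

lemma rank_mono: "X \<subseteq> Y \<Longrightarrow> Y \<subseteq> E \<Longrightarrow> r X \<le> r Y"
  using matroid unfolding matroid_def by blast

lemma rank_submodular: "X \<subseteq> E \<Longrightarrow> Y \<subseteq> E \<Longrightarrow> r (X \<union> Y) + r (X \<inter> Y) \<le> r X + r Y"
  using matroid unfolding matroid_def by blast

lemma rank_le_card_superset: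
  assumes "A \<subseteq> X" "X \<subseteq> E"
  shows "r A \<le> card X"
  using rank_mono[OF assms] rank_le_card[OF assms(2)] by linarith

lemma rank_le_rank_ground: "X \<subseteq> E \<Longrightarrow> r X \<le> r E"
  using rank_mono by blast

lemma rank_insert_le:
  assumes "X \<subseteq> E" "e \<in> E"
  shows "r (insert e X) \<le> r X + 1"
proof -
  have "r (X \<union> {e}) + r (X \<inter> {e}) \<le> r X + r {e}"
    using rank_submodular[of X "{e}"] assms by auto
  moreover have "r {e} \<le> 1"
    using rank_le_card[of "{e}"] assms by simp
  ultimately show ?thesis by simp
qed

lemma rank_Un_eq_if_spanned:
  assumes "S \<subseteq> E" "T \<subseteq> E" "\<forall>e\<in>T. r (insert e S) = r S"
  shows "r (S \<union> T) = r S"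
  using finite_subset_ground[OF assms(2)] assms
proof (induction T rule: finite_induct)
  case empty
  then show ?case by simp
next
  case (insert t T)
  have IH: "r (S \<union> T) = r S" and t: "r (insert t S) = r S"
    using insert by auto
  have "(S \<union> T) \<union> insert t S = S \<union> insert t T" by auto
  then have "r (S \<union> insert t T) + r ((S \<union> T) \<inter> insert t S) \<le> r (S \<union> T) + r (insert t S)"
    using rank_submodular[of "S \<union> T" "insert t S"] insert.prems by auto
  moreover have "r S \<le> r ((S \<union> T) \<inter> insert t S)" "r S \<le> r (S \<union> insert t T)"
    using rank_mono[of S "(S \<union> T) \<inter> insert t S"] rank_mono[of S "S \<union> insert t T"] insert.prems
    by auto
  ultimately show ?case using IH t by linarith
qed

end

locale simple_matroid = rank_matroid +
  assumes simple: "simple E r"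
begin

lemma rank_singleton: "x \<in> E \<Longrightarrow> r {x} = 1"
  using simple unfolding simple_def by auto

lemma rank_pair: "x \<in> E \<Longrightarrow> y \<in> E \<Longrightarrow> x \<noteq> y \<Longrightarrow> r {x, y} = 2"
  using simple unfolding simple_def by auto

lemma card_le_1_if_rank_le_1:
  assumes "X \<subseteq> E" "r X \<le> 1"
  shows "card X \<le> 1"
proof (rule ccontr)
  assume "\<not> card X \<le> 1"
  then obtain a b where "a \<in> X" "b \<in> X" "a \<noteq> b"
    using card_le_Suc0_iff_eq[OF finite_subset_ground[OF assms(1)]] by auto
  then have "r {a, b} \<le> r X" "r {a, b} = 2"
    using rank_mono[of "{a, b}" X] rank_pair[of a b] assms(1) by auto
  with assms(2) show False by simp
qed

lemma rank_le_2_if_two_common: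
  assumes "S \<subseteq> E" "T \<subseteq> E" "r S \<le> 2" "r T \<le> 2" "u \<in> S \<inter> T" "v \<in> S \<inter> T" "u \<noteq> v"
    and "X \<subseteq> S \<union> T"
  shows "r X \<le> 2"
proof -
  have "r (S \<union> T) + r (S \<inter> T) \<le> r S + r T"
    using rank_submodular assms(1,2) by blast
  moreover have "r {u, v} \<le> r (S \<inter> T)" "r {u, v} = 2"
    using rank_mono[of "{u, v}" "S \<inter> T"] rank_pair[of u v] assms by auto
  moreover have "r X \<le> r (S \<union> T)"
    using rank_mono assms by auto
  ultimately show ?thesis using assms(3,4) by linarith
qed

lemma rank_insert_eq_if_collinear:
  assumes "S \<subseteq> E" "a \<in> S" "b \<in> S" "a \<noteq> b" "w \<in> E" "r {a, b, w} \<le> 2"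
  shows "r (insert w S) = r S"
proof -
  have "S \<union> {a, b, w} = insert w S" using assms by auto
  then have "r (insert w S) + r (S \<inter> {a, b, w}) \<le> r S + r {a, b, w}"
    using rank_submodular[of S "{a, b, w}"] assms by auto
  moreover have "{a, b} \<subseteq> S \<inter> {a, b, w}" using assms by auto
  then have "r {a, b} \<le> r (S \<inter> {a, b, w})" using rank_mono assms(1) by blast
  moreover have "r {a, b} = 2" "r S \<le> r (insert w S)"
    using rank_mono[of S "insert w S"] rank_pair[of a b] assms by auto
  ultimately show ?thesis using assms(6) by linarith
qed

lemma obtain_noncollinear_triple:
  assumes "X \<subseteq> E" "2 < r X"
  obtains x y z where "x \<in> X" "y \<in> X" "z \<in> X" "x \<noteq> y" "y \<noteq> z" "x \<noteq> z" "2 < r {x, y, z}"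
proof -
  have "X \<noteq> {}" using assms(2) rank_le_card by fastforce
  then obtain x where x: "x \<in> X" by blast
  have "\<exists>y\<in>X. r (insert y {x}) \<noteq> r {x}"
  proof (rule ccontr)
    assume "\<not> ?thesis"
    then have "r ({x} \<union> X) = r {x}" using rank_Un_eq_if_spanned[of "{x}" X] x assms(1) by auto
    moreover have "{x} \<union> X = X" using x by auto
    ultimately show False using rank_singleton[of x] x assms by auto
  qed
  then obtain y where y: "y \<in> X" "y \<noteq> x" by force
  have "\<exists>z\<in>X. r (insert z {x, y}) \<noteq> r {x, y}"
  proof (rule ccontr)
    assume "\<not> ?thesis"
    then have "r ({x, y} \<union> X) = r {x, y}" using rank_Un_eq_if_spanned[of "{x, y}" X] x y assms(1) by auto
    moreover have "{x, y} \<union> X = X" using x y by auto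
    ultimately show False using rank_pair[of x y] x y assms by auto
  qed
  then obtain z where z: "z \<in> X" "r {x, y, z} \<noteq> r {x, y}" by (auto simp: insert_commute)
  then have "z \<noteq> x" "z \<noteq> y" by (auto simp: insert_commute)
  have "r {x, y} \<le> r {x, y, z}" using rank_mono[of "{x, y}" "{x, y, z}"] x y z assms(1) by auto
  moreover have "r {x, y} = 2" using rank_pair[of x y] x y assms(1) by auto
  ultimately have "2 < r {x, y, z}" using z(2) by linarith
  then show ?thesis using that x y z \<open>z \<noteq> x\<close> \<open>z \<noteq> y\<close> by blast
qed

definition line :: "'a \<Rightarrow> 'a \<Rightarrow> 'a set" where
  "line a b = {e \<in> E. r {a, b, e} \<le> 2}"

lemma ends_mem_line:
  assumes "a \<in> E" "b \<in> E"
  shows "a \<in> line a b" "b \<in> line a b"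
proof -
  have "card {a, b} \<le> 2" by (cases "a = b") auto
  then have "r {a, b} \<le> 2" using rank_le_card[of "{a, b}"] assms by simp
  then show "a \<in> line a b" "b \<in> line a b" using assms unfolding line_def by (auto simp: insert_commute)
qed

lemma nontrivial_line_line:
  assumes "a \<in> E" "b \<in> E" "w \<in> E" "a \<noteq> b" "w \<noteq> a" "w \<noteq> b" "r {a, b, w} \<le> 2"
  shows "nontrivial_line E r (line a b)"
proof -
  have ab: "r {a, b} = 2" using rank_pair assms by auto
  have abw: "a \<in> line a b" "b \<in> line a b" "w \<in> line a b"
    using ends_mem_line assms unfolding line_def by auto
  have sub: "line a b \<subseteq> E" unfolding line_def by auto
  have "r ({a, b} \<union> line a b) = r {a, b}"
  proof (rule rank_Un_eq_if_spanned)
    show "\<forall>e\<in>line a b. r (insert e {a, b}) = r {a, b}"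
    proof
      fix e assume e: "e \<in> line a b"
      then have "r (insert e {a, b}) \<le> 2" unfolding line_def by (simp add: insert_commute)
      moreover have "r {a, b} \<le> r (insert e {a, b})" using rank_mono e sub assms by auto
      ultimately show "r (insert e {a, b}) = r {a, b}" using ab by simp
    qed
  qed (use assms sub in auto)
  moreover have "{a, b} \<union> line a b = line a b" using abw by auto
  ultimately have rank: "r (line a b) = 2" using ab by simp
  have "flat E r (line a b)"
    unfolding flat_def
  proof (intro conjI ballI)
    fix e assume e: "e \<in> E - line a b"
    then have "2 < r {a, b, e}" unfolding line_def by auto
    moreover have "r {a, b, e} \<le> r (insert e (line a b))" using rank_mono abw e sub by auto
    ultimately show "r (line a b) < r (insert e (line a b))" using rank by simp
  qed (rule sub)
  moreover have "card {a, b, w} \<le> card (line a b)"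
    using card_mono[OF finite_subset_ground[OF sub]] abw by auto
  ultimately show ?thesis
    unfolding nontrivial_line_def using rank assms by auto
qed

section \<open>Contraction and simplification\<close>

lemma contract_rank_Suc:
  assumes "x \<in> E" "Z \<subseteq> E"
  shows "contract_rank r x Z + 1 = r (insert x Z)"
proof -
  have "r {x} \<le> r (insert x Z)" using rank_mono assms by auto
  then show ?thesis using rank_singleton[OF assms(1)] unfolding contract_rank_def by simp
qed

lemma contract_rank_singleton:
  assumes "x \<in> E" "y \<in> E - {x}"
  shows "contract_rank r x {y} = 1"
  using contract_rank_Suc[of x "{y}"] rank_pair[of x y] assms by auto

lemma contract_rank_pair_cases:
  assumes x: "x \<in> E" and "y \<in> E - {x}" "s \<in> E - {x}"
  shows "contract_rank r x {y, s} = 1 \<or> contract_rank r x {y, s} = 2"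
proof -
  have "card (insert x {y, s}) \<le> 3" by (simp add: card_insert_if)
  then have "r (insert x {y, s}) \<le> 3" using rank_le_card[of "insert x {y, s}"] assms by simp
  moreover have "r {x, y} \<le> r (insert x {y, s})" "r {x, y} = 2"
    using rank_mono[of "{x, y}" "insert x {y, s}"] rank_pair[of x y] assms by auto
  moreover have "contract_rank r x {y, s} + 1 = r (insert x {y, s})"
    using contract_rank_Suc[OF x, of "{y, s}"] assms by auto
  ultimately show ?thesis by linarith
qed

text \<open>A maximal set of pairwise non-parallel elements of \<open>M/x\<close> meets every parallel class;
  \<open>M/x\<close> has no loops as \<open>M\<close> is simple. So the choice in \<open>simp_set\<close> is not vacuous.\<close>
lemma exists_simplification_contract:
  assumes x: "x \<in> E"
  defines "rx \<equiv> contract_rank r x"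
  shows "\<exists>S. S \<subseteq> E - {x} \<and> (\<forall>y\<in>S. rx {y} = 1) \<and> (\<forall>y\<in>S. \<forall>z\<in>S. y \<noteq> z \<longrightarrow> rx {y, z} = 2)
      \<and> (\<forall>y\<in>E - {x}. rx {y} = 1 \<longrightarrow> (\<exists>z\<in>S. rx {y, z} = 1))"
proof -
  define F where "F = {S. S \<subseteq> E - {x} \<and> (\<forall>s\<in>S. rx {s} = 1) \<and> (\<forall>s\<in>S. \<forall>t\<in>S. s \<noteq> t \<longrightarrow> rx {s, t} = 2)}"
  have "finite F"
    using finite_ground by (auto simp: F_def intro: finite_subset[of F "Pow E"])
  moreover have "{} \<in> F" unfolding F_def by auto
  ultimately obtain T where T: "T \<in> F" and T_max: "\<forall>T'\<in>F. card T' \<le> card T"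
    using Max_in[of "card ` F"] Max_ge[of "card ` F"] by (metis empty_iff finite_imageI image_iff)
  have "finite T" using T finite_ground unfolding F_def by (auto intro: finite_subset)
  have "\<exists>s\<in>T. rx {y, s} = 1" if y: "y \<in> E - {x}" for y
  proof (cases "y \<in> T")
    case True
    then show ?thesis using contract_rank_singleton[OF x y] unfolding rx_def by (intro bexI[of _ y]) auto
  next
    case False
    then have "insert y T \<notin> F" using T_max \<open>finite T\<close> by fastforce
    then obtain s where s: "s \<in> T" "s \<noteq> y" "rx {y, s} \<noteq> 2"
      using T y contract_rank_singleton[OF x y] unfolding F_def rx_def
      by (auto simp: insert_commute)
    moreover have "s \<in> E - {x}" using s T unfolding F_def by auto
    ultimately show ?thesis using contract_rank_pair_cases[OF x y] unfolding rx_def by blast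
  qed
  then show ?thesis using T unfolding F_def by blast
qed

lemma simp_set_contract:
  assumes x: "x \<in> E"
  defines "rx \<equiv> contract_rank r x" and "S \<equiv> simp_set (E - {x}) (contract_rank r x)"
  shows "S \<subseteq> E - {x}" "\<forall>s\<in>S. \<forall>t\<in>S. s \<noteq> t \<longrightarrow> rx {s, t} = 2"
    "\<forall>y\<in>E - {x}. \<exists>s\<in>S. rx {y, s} = 1"
proof -
  have "S \<subseteq> E - {x} \<and> (\<forall>y\<in>S. rx {y} = 1) \<and> (\<forall>y\<in>S. \<forall>z\<in>S. y \<noteq> z \<longrightarrow> rx {y, z} = 2)
      \<and> (\<forall>y\<in>E - {x}. rx {y} = 1 \<longrightarrow> (\<exists>z\<in>S. rx {y, z} = 1))"
    using exists_simplification_contract[OF x] unfolding S_def simp_set_def rx_def by (rule someI_ex)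
  then show "S \<subseteq> E - {x}" "\<forall>s\<in>S. \<forall>t\<in>S. s \<noteq> t \<longrightarrow> rx {s, t} = 2"
    "\<forall>y\<in>E - {x}. \<exists>s\<in>S. rx {y, s} = 1"
    using contract_rank_singleton[OF x] unfolding rx_def by auto
qed

definition parallel_hull :: "'a \<Rightarrow> 'a set \<Rightarrow> 'a set" where
  "parallel_hull x X = {y \<in> E - {x}. \<exists>a\<in>X. contract_rank r x {y, a} = 1}"

lemma subset_parallel_hull:
  assumes "x \<in> E" "X \<subseteq> E - {x}"
  shows "X \<subseteq> parallel_hull x X"
  using contract_rank_singleton[OF assms(1)] assms(2) unfolding parallel_hull_def by fastforce

lemma rank_insert_parallel_hull:
  assumes x: "x \<in> E" and X: "X \<subseteq> E - {x}"
  shows "r (insert x (parallel_hull x X)) = r (insert x X)"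
proof -
  have "r (insert x X \<union> parallel_hull x X) = r (insert x X)"
  proof (rule rank_Un_eq_if_spanned)
    show "\<forall>y\<in>parallel_hull x X. r (insert y (insert x X)) = r (insert x X)"
    proof
      fix y assume "y \<in> parallel_hull x X"
      then obtain a where a: "a \<in> X" "contract_rank r x {y, a} = 1" and y: "y \<in> E - {x}"
        unfolding parallel_hull_def by auto
      have "r {x, a, y} \<le> 2"
        using contract_rank_Suc[OF x, of "{y, a}"] a X y by (auto simp: insert_commute)
      then show "r (insert y (insert x X)) = r (insert x X)"
        using rank_insert_eq_if_collinear[of "insert x X" x a y] x X a y by auto
    qed
  qed (use x X in \<open>auto simp: parallel_hull_def\<close>)
  moreover have "insert x X \<union> parallel_hull x X = insert x (parallel_hull x X)"
    using subset_parallel_hull[OF x X] by auto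
  ultimately show ?thesis by simp
qed

lemma lift_partition_of_simplification:
  assumes x: "x \<in> E" and S: "S \<subseteq> E - {x}" "\<forall>y\<in>E - {x}. \<exists>s\<in>S. contract_rank r x {y, s} = 1"
    "\<forall>s\<in>S. \<forall>t\<in>S. s \<noteq> t \<longrightarrow> contract_rank r x {s, t} = 2"
    and X: "X \<subseteq> S"
  obtains A B where "A \<union> B = E" "A \<inter> B = {x}" "X \<subseteq> A" "S - X \<subseteq> B"
    "r A = r (insert x X)" "r B = r (insert x (S - X))"
proof -
  define A where "A = insert x (parallel_hull x X)"
  define B where "B = insert x (E - {x} - parallel_hull x X)"
  have XS: "X \<subseteq> E - {x}" "S - X \<subseteq> E - {x}" using S(1) X by auto
  have B_sub: "B \<subseteq> insert x (parallel_hull x (S - X))"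
    using S(2) unfolding B_def parallel_hull_def by fastforce
  have "insert x (S - X) \<subseteq> B"
    using S(1,3) X unfolding B_def parallel_hull_def by fastforce
  moreover have "insert x (parallel_hull x (S - X)) \<subseteq> E"
    using x unfolding parallel_hull_def by auto
  ultimately have "r (insert x (S - X)) \<le> r B" "r B \<le> r (insert x (parallel_hull x (S - X)))"
    using rank_mono[OF B_sub] rank_mono[of "insert x (S - X)" B] B_sub by auto
  then have "r B = r (insert x (S - X))"
    using rank_insert_parallel_hull[OF x XS(2)] by linarith
  moreover have "r A = r (insert x X)"
    using rank_insert_parallel_hull[OF x XS(1)] unfolding A_def by auto
  moreover have "A \<union> B = E" "A \<inter> B = {x}" using x unfolding A_def B_def parallel_hull_def by auto
  moreover have "X \<subseteq> A" using subset_parallel_hull[OF x XS(1)] unfolding A_def by auto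
  ultimately show thesis using that \<open>insert x (S - X) \<subseteq> B\<close> by blast
qed

lemma three_le_rank_insert_nonparallel:
  assumes x: "x \<in> E" and Y: "Y \<subseteq> E - {x}" "2 \<le> card Y"
    and "\<forall>s\<in>Y. \<forall>t\<in>Y. s \<noteq> t \<longrightarrow> contract_rank r x {s, t} = 2"
  shows "3 \<le> r (insert x Y)"
proof -
  have "finite Y" "\<not> card Y \<le> Suc 0" using Y finite_subset_ground[of Y] by auto
  then obtain a b where ab: "a \<in> Y" "b \<in> Y" "a \<noteq> b" using card_le_Suc0_iff_eq by blast
  then have "contract_rank r x {a, b} + 1 = r (insert x {a, b})" "contract_rank r x {a, b} = 2"
    using contract_rank_Suc[OF x, of "{a, b}"] Y assms(4) by auto
  moreover have "r (insert x {a, b}) \<le> r (insert x Y)"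
    using rank_mono[of "insert x {a, b}" "insert x Y"] ab Y x by auto
  ultimately show ?thesis by simp
qed

end

section \<open>Vertical separations in 3-connected matroids\<close>

locale three_connected_matroid = simple_matroid +
  assumes three_connected: "three_connected E r"
begin

lemma rank_sum_ge_1:
  assumes "X \<subseteq> E" "X \<noteq> {}" "E - X \<noteq> {}"
  shows "r E + 1 \<le> r X + r (E - X)"
proof -
  have "1 \<le> card X" "1 \<le> card (E - X)"
    using assms finite_subset_ground by (auto simp: Suc_le_eq card_gt_0_iff)
  moreover have "\<not> k_separation E r 1 X" using three_connected unfolding three_connected_def by auto
  ultimately show ?thesis using assms(1) unfolding k_separation_def by auto
qed

lemma rank_sum_ge_2:
  assumes "X \<subseteq> E" "2 \<le> card X" "2 \<le> card (E - X)"
  shows "r E + 2 \<le> r X + r (E - X)"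
proof -
  have "\<not> k_separation E r 2 X" using three_connected unfolding three_connected_def by auto
  then show ?thesis using assms unfolding k_separation_def by auto
qed

lemma rank_sum_ge_if_meet_singleton:
  assumes U: "A \<union> B = E" and I: "A \<inter> B = {x}" and "A \<noteq> {x}" "B \<noteq> {x}"
  shows "r E + 2 \<le> r A + r B"
proof -
  have AE: "A \<subseteq> E" and B: "E - A = B - {x}" using U I by auto
  obtain a where a: "a \<in> A" "a \<noteq> x" using assms(3) I by blast
  show ?thesis
  proof (cases "2 \<le> card (B - {x})")
    case True
    have "{x, a} \<subseteq> A" using a I by auto
    then have "card {x, a} \<le> card A" using card_mono finite_subset_ground[OF AE] by blast
    then have "r E + 2 \<le> r A + r (B - {x})"
      using rank_sum_ge_2[OF AE] True a B by simp
    moreover have "r (B - {x}) \<le> r B" using rank_mono U by auto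
    ultimately show ?thesis by linarith
  next
    case False
    moreover have "B - {x} \<noteq> {}" using assms(4) I by blast
    moreover have "finite (B - {x})" using finite_subset_ground U by auto
    ultimately have "card (B - {x}) = 1" using card_gt_0_iff[of "B - {x}"] by linarith
    then obtain y where y: "B - {x} = {y}" by (rule card_1_singletonE)
    have "B = {x, y}" "x \<in> E" "y \<in> E" "y \<noteq> x" using y I U by auto
    then have "r B = 2" using rank_pair by auto
    moreover have "E - {y} = A" "x \<in> A" using y I U by auto
    then have "r E + 1 \<le> r {y} + r A"
      using rank_sum_ge_1[of "{y}"] \<open>y \<in> E\<close> by auto
    ultimately show ?thesis using rank_singleton[of y] \<open>y \<in> E\<close> by simp
  qed
qed

text \<open>\<open>vertical_sep x A B\<close> is the vertical 3-separation \<open>(A - {x}, {x}, B - {x})\<close> of the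
  paper.\<close>
definition vertical_sep :: "'a \<Rightarrow> 'a set \<Rightarrow> 'a set \<Rightarrow> bool" where
  "vertical_sep x A B \<longleftrightarrow> A \<union> B = E \<and> A \<inter> B = {x} \<and> 3 \<le> r A \<and> 3 \<le> r B \<and> r A + r B \<le> r E + 2"

lemma vertical_sep_sym: "vertical_sep x A B \<Longrightarrow> vertical_sep x B A"
  unfolding vertical_sep_def by auto

lemma vertical_sep_orient:
  assumes "vertical_sep x A B" "y \<in> E"
  obtains A B where "vertical_sep x A B" "y \<in> A"
proof -
  have "y \<in> A \<or> y \<in> B" using assms unfolding vertical_sep_def by auto
  then show thesis using that assms(1) vertical_sep_sym by blast
qed

lemma vertical_sep_rank_sum:
  assumes "vertical_sep x A B"
  shows "r A + r B = r E + 2"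
proof -
  have U: "A \<union> B = E" "A \<inter> B = {x}" and "3 \<le> r A" "3 \<le> r B" "r A + r B \<le> r E + 2"
    using assms unfolding vertical_sep_def by auto
  moreover have "r {x} \<le> 1" using rank_le_card[of "{x}"] U by auto
  ultimately have "A \<noteq> {x}" "B \<noteq> {x}" by auto
  then show ?thesis using rank_sum_ge_if_meet_singleton[OF U] \<open>r A + r B \<le> r E + 2\<close> by linarith
qed

lemma vertical_sep_rank_Diff:
  assumes sep: "vertical_sep x A B"
  shows "r (A - {x}) = r A"
proof -
  have AE: "A \<subseteq> E" and U: "E - (A - {x}) = B" and "x \<in> A"
    using sep unfolding vertical_sep_def by auto
  have "3 \<le> card A" "3 \<le> card B"
    using sep rank_le_card[OF AE] rank_le_card[of B] unfolding vertical_sep_def by auto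
  then have "2 \<le> card (A - {x})" using \<open>x \<in> A\<close> by simp
  then have "r E + 2 \<le> r (A - {x}) + r B"
    using rank_sum_ge_2[of "A - {x}"] AE U \<open>3 \<le> card B\<close> by auto
  moreover have "r (A - {x}) \<le> r A" using rank_mono AE by auto
  ultimately show ?thesis using vertical_sep_rank_sum[OF sep] by linarith
qed

lemma vertical_sep_rank_ground: "vertical_sep x A B \<Longrightarrow> 4 \<le> r E"
  using vertical_sep_rank_sum unfolding vertical_sep_def by fastforce

text \<open>A 1- or 2-separation of \<open>si(M/x)\<close> lifts to a pair \<open>A, B\<close> meeting in \<open>x\<close>; a lifted
  1-separation would contradict 3-connectivity of \<open>M\<close>, so it is a 2-separation, which is
  vertical.\<close>
lemma not_vert_contractible_imp_vertical_sep:
  assumes x: "x \<in> E" and not_vc: "\<not> vert_contractible E r x"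
  shows "\<exists>A B. vertical_sep x A B"
proof -
  define rx where "rx = contract_rank r x"
  define S where "S = simp_set (E - {x}) rx"
  have S: "S \<subseteq> E - {x}" "\<forall>y\<in>E - {x}. \<exists>s\<in>S. rx {y, s} = 1" "\<forall>s\<in>S. \<forall>t\<in>S. s \<noteq> t \<longrightarrow> rx {s, t} = 2"
    using simp_set_contract[OF x] unfolding S_def rx_def by auto
  have rx: "rx Z + 1 = r (insert x Z)" if "Z \<subseteq> S" for Z
    using contract_rank_Suc[OF x] that S(1) unfolding rx_def by auto
  have "\<not> three_connected S rx" using not_vc x unfolding vert_contractible_def S_def rx_def by auto
  then obtain k X where k: "1 \<le> k" "k < 3" and "k_separation S rx k X"
    unfolding three_connected_def by auto
  then have X: "X \<subseteq> S" "k \<le> card X" "k \<le> card (S - X)" and sep: "rx X + rx (S - X) < rx S + k"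
    unfolding k_separation_def by auto
  obtain A B where UI: "A \<union> B = E" "A \<inter> B = {x}" and "X \<subseteq> A" "S - X \<subseteq> B"
    and rA: "r A = r (insert x X)" and rB: "r B = r (insert x (S - X))"
    using lift_partition_of_simplification[OF x S[unfolded rx_def] X(1)] by blast
  have "rx S + 1 \<le> r E" using rx[of S] rank_le_rank_ground[of "insert x S"] x S(1) by auto
  then have sum: "r A + r B < r E + 1 + k"
    using sep rA rB rx[OF X(1)] rx[of "S - X"] by simp
  have "X \<noteq> {}" "S - X \<noteq> {}" using X k by auto
  then have "A \<noteq> {x}" "B \<noteq> {x}" using \<open>X \<subseteq> A\<close> \<open>S - X \<subseteq> B\<close> S(1) X(1) by auto
  then have "k = 2" using rank_sum_ge_if_meet_singleton[OF UI] sum k by linarith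
  then have "3 \<le> r A" "3 \<le> r B"
    using three_le_rank_insert_nonparallel[OF x, of X] three_le_rank_insert_nonparallel[OF x, of "S - X"]
      S(1,3) X rA rB unfolding rx_def by auto
  moreover have "r A + r B \<le> r E + 2" using sum \<open>k = 2\<close> by linarith
  ultimately have "vertical_sep x A B" using UI unfolding vertical_sep_def by blast
  then show ?thesis by blast
qed

end

section \<open>A cocircuit of rank 3\<close>

locale rank3_cocircuit = three_connected_matroid +
  fixes C :: "'a set"
  assumes cocircuit: "cocircuit E r C" and rank_C: "r C = 3"
begin

definition H :: "'a set" where "H = E - C"

lemma cocircuit_subset: "C \<subseteq> E"
  using cocircuit unfolding cocircuit_def circuit_def by auto

lemma H_subset: "H \<subseteq> E"
  unfolding H_def by auto

lemma three_le_card_C: "3 \<le> card C"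
  using rank_le_card[OF cocircuit_subset] rank_C by simp

lemma rank_insert_H_eq:
  assumes "x \<in> C"
  shows "r (insert x H) = r E"
proof -
  have "indep E (dual_rank E r) (C - {x})"
    using cocircuit assms unfolding cocircuit_def circuit_def by auto
  then have "card (C - {x}) + r (E - (C - {x})) - r E = card (C - {x})"
    unfolding indep_def dual_rank_def by auto
  moreover have "2 \<le> card (C - {x})" using three_le_card_C assms by simp
  moreover have "E - (C - {x}) = insert x H"
    using assms cocircuit_subset unfolding H_def by auto
  ultimately show ?thesis using rank_le_rank_ground[of "insert x H"] H_subset cocircuit_subset assms
    by auto
qed

lemma rank_H: "r H + 1 = r E"
proof -
  have "\<not> indep E (dual_rank E r) C"
    using cocircuit unfolding cocircuit_def circuit_def by auto
  then have "r H < r E"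
    using cocircuit_subset rank_le_rank_ground[of "E - C"]
    unfolding indep_def dual_rank_def H_def by auto
  moreover obtain x where "x \<in> C" using three_le_card_C by fastforce
  ultimately show ?thesis
    using rank_insert_H_eq rank_insert_le[OF H_subset, of x] cocircuit_subset by fastforce
qed

lemma rank_insert_cocircuit:
  assumes "S \<subseteq> H" "x \<in> C"
  shows "r (insert x S) = r S + 1"
proof -
  have "insert x S \<union> H = insert x H" "insert x S \<inter> H = S"
    using assms unfolding H_def by auto
  then have "r (insert x H) + r S \<le> r (insert x S) + r H"
    using rank_submodular[of "insert x S" H] assms H_subset cocircuit_subset by auto
  then have "r S + 1 \<le> r (insert x S)" using rank_insert_H_eq[OF assms(2)] rank_H by simp
  moreover have "r (insert x S) \<le> r S + 1"
    using rank_insert_le[of S x] assms H_subset cocircuit_subset by auto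
  ultimately show ?thesis by simp
qed

lemma rank_Int_H_less:
  assumes "x \<in> C" "x \<in> A" "A \<subseteq> E"
  shows "r (A \<inter> H) + 1 \<le> r A"
proof -
  have "r (A \<union> H) + r (A \<inter> H) \<le> r A + r H" using rank_submodular[OF assms(3) H_subset] .
  moreover have "r (insert x H) \<le> r (A \<union> H)"
    using rank_mono[of "insert x H" "A \<union> H"] assms H_subset by auto
  ultimately show ?thesis using rank_insert_H_eq[OF assms(1)] rank_H by linarith
qed

text \<open>3-connectivity across the partition \<open>(A \<inter> H, B \<union> C)\<close>, together with
  \<open>rank_Int_H_less\<close>, leaves no room for \<open>B \<inter> C\<close> to span \<open>C\<close>.\<close>
lemma rank_sep_Int_cocircuit_le:
  assumes x: "x \<in> C" and sep: "vertical_sep x A B"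
  shows "r (B \<inter> C) \<le> 2"
proof -
  have AE: "A \<subseteq> E" and BE: "B \<subseteq> E" and xA: "x \<in> A"
    and rA: "3 \<le> r A" and sum: "r A + r B \<le> r E + 2"
    using sep unfolding vertical_sep_def by auto
  define HA where "HA = A \<inter> H"
  have HA: "HA \<subseteq> E" "E - HA = B \<union> C"
    using sep cocircuit_subset x unfolding HA_def H_def vertical_sep_def by auto
  have BC: "r (B \<union> C) + r (B \<inter> C) \<le> r B + 3"
    using rank_submodular[OF BE cocircuit_subset] rank_C by simp
  consider "2 \<le> card HA" | "HA = {}" | h where "HA = {h}"
    using finite_subset_ground[OF HA(1)]
    by (metis One_nat_def card_1_singletonE card_eq_0_iff less_2_cases not_less)
  then show ?thesis
  proof cases
    case 1
    have "card C \<le> card (E - HA)"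
      using card_mono[OF finite_subset_ground[of "E - HA"]] HA by auto
    then have "r E + 2 \<le> r HA + r (B \<union> C)"
      using rank_sum_ge_2[OF HA(1) 1] three_le_card_C HA(2) by auto
    then show ?thesis using BC sum rank_Int_H_less[OF x xA AE] unfolding HA_def by linarith
  next
    case 2
    then have "r (B \<union> C) = r E" using HA(2) by simp
    then show ?thesis using BC rA sum by linarith
  next
    case (3 h)
    have h: "h \<in> E" using 3 HA(1) by auto
    have "C \<subseteq> E - {h}" using 3 cocircuit_subset unfolding HA_def H_def by auto
    then have "E - {h} \<noteq> {}" using three_le_card_C by fastforce
    then have "r E + 1 \<le> r {h} + r (B \<union> C)"
      using rank_sum_ge_1[of "{h}"] h HA(2) 3 by auto
    then show ?thesis using BC rA sum rank_singleton[OF h] by linarith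
  qed
qed

lemma rank_sep_Int_cocircuit:
  assumes x: "x \<in> C" and sep: "vertical_sep x A B"
  shows "r (A \<inter> C) = 2"
proof -
  have "(A \<inter> C) \<union> (B \<inter> C) = C" "(A \<inter> C) \<inter> (B \<inter> C) = {x}"
    using sep cocircuit_subset x unfolding vertical_sep_def by auto
  then have "r C + r {x} \<le> r (A \<inter> C) + r (B \<inter> C)"
    using rank_submodular[of "A \<inter> C" "B \<inter> C"] cocircuit_subset by auto
  then show ?thesis
    using rank_sep_Int_cocircuit_le[OF x sep] rank_sep_Int_cocircuit_le[OF x vertical_sep_sym[OF sep]]
      rank_C rank_singleton[of x] x cocircuit_subset by auto
qed

lemma collinear_if_same_side:
  assumes "x \<in> C" "vertical_sep x A B" "y \<in> A \<inter> C" "z \<in> A \<inter> C"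
  shows "r {x, y, z} \<le> 2"
proof -
  have "{x, y, z} \<subseteq> A \<inter> C" using assms unfolding vertical_sep_def by auto
  then have "r {x, y, z} \<le> r (A \<inter> C)"
    using rank_mono[of "{x, y, z}" "A \<inter> C"] cocircuit_subset by auto
  then show ?thesis using rank_sep_Int_cocircuit[OF assms(1,2)] by simp
qed

lemma triangle_distinct:
  assumes "C = {x, y, z}"
  shows "x \<noteq> y" "y \<noteq> z" "x \<noteq> z"
proof -
  have "3 \<le> card {x, y, z}" using three_le_card_C assms by simp
  then show "x \<noteq> y" "y \<noteq> z" "x \<noteq> z" by (auto simp: card_insert_if split: if_splits)
qed

lemma triangle_sep_splits:
  assumes C: "C = {x, y, z}" and sep: "vertical_sep x A B" and "y \<in> A"
  shows "z \<in> B"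
proof (rule ccontr)
  assume "z \<notin> B"
  then have "z \<in> A" using sep C cocircuit_subset unfolding vertical_sep_def by auto
  then have "r {x, y, z} \<le> 2"
    using collinear_if_same_side[of x A B y z] sep \<open>y \<in> A\<close> C by auto
  then show False using rank_C C by simp
qed

lemma rank_triangle_side:
  assumes C: "C = {x, y, z}" and sep: "vertical_sep x A B" and "y \<in> A"
  shows "r A = r (A \<inter> H) + 1"
proof -
  have "z \<in> B" "A \<inter> B = {x}" "A \<subseteq> E"
    using triangle_sep_splits[OF C sep \<open>y \<in> A\<close>] sep unfolding vertical_sep_def by auto
  then have "A - {x} = insert y (A \<inter> H)"
    using triangle_distinct[OF C] C \<open>y \<in> A\<close> unfolding H_def by auto
  then show ?thesis
    using vertical_sep_rank_Diff[OF sep] rank_insert_cocircuit[of "A \<inter> H" y] C by auto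
qed

end

section \<open>Crossing separations of a triangle\<close>

text \<open>Two vertical separations, of \<open>x\<close> and of \<open>y\<close>, when \<open>C = {x, y, z}\<close>: they cut \<open>H\<close>
  into four cells, and uncrossing them bounds the cells via 3-connectivity.\<close>
locale crossing_separations = rank3_cocircuit +
  fixes x y z :: 'a and Ax Bx Ay By :: "'a set"
  assumes C_eq: "C = {x, y, z}"
    and sep_x: "vertical_sep x Ax Bx" and y_Ax: "y \<in> Ax"
    and sep_y: "vertical_sep y Ay By" and x_Ay: "x \<in> Ay"
begin

definition "W_AA = Ax \<inter> Ay \<inter> H"
definition "W_AB = Ax \<inter> By \<inter> H"
definition "W_BA = Bx \<inter> Ay \<inter> H"
definition "W_BB = Bx \<inter> By \<inter> H"

lemma distinct: "x \<noteq> y" "y \<noteq> z" "x \<noteq> z"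
  using triangle_distinct[OF C_eq] by auto

lemma z_Bx: "z \<in> Bx" and z_By: "z \<in> By"
  using triangle_sep_splits[OF C_eq sep_x y_Ax] triangle_sep_splits[of y x z Ay By] C_eq sep_y x_Ay
  by auto

lemma sides: "Ax \<union> Bx = E" "Ax \<inter> Bx = {x}" "Ay \<union> By = E" "Ay \<inter> By = {y}"
  using sep_x sep_y unfolding vertical_sep_def by auto

lemma H_eq: "H = E - {x, y, z}"
  using C_eq unfolding H_def by simp

lemma cells_Ax: "Ax \<inter> H = W_AA \<union> W_AB" and cells_Bx: "Bx \<inter> H = W_BA \<union> W_BB"
  and cells_Ay: "Ay \<inter> H = W_AA \<union> W_BA" and cells_By: "By \<inter> H = W_AB \<union> W_BB"
  using sides H_subset unfolding W_AA_def W_AB_def W_BA_def W_BB_def by auto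

lemma rank_sides:
  "r Ax = r (W_AA \<union> W_AB) + 1" "r Bx = r (W_BA \<union> W_BB) + 1"
  "r Ay = r (W_AA \<union> W_BA) + 1" "r By = r (W_AB \<union> W_BB) + 1"
proof -
  note cells_Ax cells_Bx cells_Ay cells_By
  moreover have "C = {x, z, y}" "C = {y, x, z}" "C = {y, z, x}" using C_eq by auto
  ultimately show "r Ax = r (W_AA \<union> W_AB) + 1" "r Bx = r (W_BA \<union> W_BB) + 1"
    "r Ay = r (W_AA \<union> W_BA) + 1" "r By = r (W_AB \<union> W_BB) + 1"
    using rank_triangle_side[OF C_eq sep_x y_Ax] rank_triangle_side[of x z y Bx Ax]
      rank_triangle_side[of y x z Ay By] rank_triangle_side[of y z x By Ay]
      vertical_sep_sym sep_x sep_y z_Bx z_By x_Ay by auto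
qed

lemma cells_subset: "W_AA \<subseteq> H" "W_AB \<subseteq> H" "W_BA \<subseteq> H" "W_BB \<subseteq> H"
  unfolding W_AA_def W_AB_def W_BA_def W_BB_def by auto

lemma uncross_AA_BB:
  "r (insert x (insert y W_AA)) + r (E - insert z W_BB) + r (insert z W_BB) + r (E - W_AA) \<le> 2 * r E + 4"
proof -
  have "Ax \<inter> Ay = insert x (insert y W_AA)" "Ax \<union> Ay = E - insert z W_BB"
    "Bx \<inter> By = insert z W_BB" "Bx \<union> By = E - W_AA"
    using sides distinct y_Ax x_Ay z_Bx z_By unfolding W_AA_def W_BB_def H_eq by auto
  moreover have "r (Ax \<union> Ay) + r (Ax \<inter> Ay) \<le> r Ax + r Ay" "r (Bx \<union> By) + r (Bx \<inter> By) \<le> r Bx + r By"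
    using rank_submodular sides by auto
  ultimately show ?thesis
    using vertical_sep_rank_sum[OF sep_x] vertical_sep_rank_sum[OF sep_y] by simp
qed

lemma uncross_AB_BA:
  "r W_AB + r (E - W_BA) + r W_BA + r (E - W_AB) + 2 \<le> 2 * r E + 4"
proof -
  have "Ax \<inter> By = insert y W_AB" "Ax \<union> By = E - W_BA" "Bx \<inter> Ay = insert x W_BA" "Bx \<union> Ay = E - W_AB"
    using sides distinct y_Ax x_Ay z_Bx z_By unfolding W_AB_def W_BA_def H_eq by auto
  moreover have "r (Ax \<union> By) + r (Ax \<inter> By) \<le> r Ax + r By" "r (Bx \<union> Ay) + r (Bx \<inter> Ay) \<le> r Bx + r Ay"
    using rank_submodular sides by auto
  moreover have "r (insert y W_AB) = r W_AB + 1" "r (insert x W_BA) = r W_BA + 1"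
    using rank_insert_cocircuit cells_subset C_eq by auto
  ultimately show ?thesis
    using vertical_sep_rank_sum[OF sep_x] vertical_sep_rank_sum[OF sep_y] by simp
qed

lemma cells_subset_ground: "W_AA \<subseteq> E" "W_AB \<subseteq> E" "W_BA \<subseteq> E" "W_BB \<subseteq> E"
  using cells_subset H_subset by auto

lemma two_le_card_complements:
  "2 \<le> card (E - insert z W_BB)" "2 \<le> card (E - W_AA)" "2 \<le> card (E - W_AB)" "2 \<le> card (E - W_BA)"
proof -
  have "Ax \<subseteq> E - insert z W_BB" "Bx \<subseteq> E - W_AA" "Bx \<subseteq> E - W_AB" "Ax \<subseteq> E - W_BA"
    using sides distinct y_Ax x_Ay z_Bx z_By unfolding W_AA_def W_AB_def W_BA_def W_BB_def H_eq
    by auto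
  moreover have "3 \<le> r Ax" "3 \<le> r Bx" using sep_x unfolding vertical_sep_def by auto
  ultimately show "2 \<le> card (E - insert z W_BB)" "2 \<le> card (E - W_AA)" "2 \<le> card (E - W_AB)"
    "2 \<le> card (E - W_BA)"
    using rank_le_card_superset[of Ax "E - insert z W_BB"] rank_le_card_superset[of Bx "E - W_AA"]
      rank_le_card_superset[of Bx "E - W_AB"] rank_le_card_superset[of Ax "E - W_BA"] by auto
qed

lemma card_W_AA_le_1:
  assumes "2 \<le> card (insert z W_BB)"
  shows "card W_AA \<le> 1"
proof (rule ccontr)
  assume "\<not> card W_AA \<le> 1"
  then have "r E + 2 \<le> r W_AA + r (E - W_AA)"
    using rank_sum_ge_2 cells_subset_ground two_le_card_complements by simp
  moreover have "r E + 2 \<le> r (insert z W_BB) + r (E - insert z W_BB)"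
    using rank_sum_ge_2 assms cells_subset_ground two_le_card_complements C_eq cocircuit_subset
    by simp
  moreover have "r (insert x W_AA) \<le> r (insert x (insert y W_AA))"
    using rank_mono[of "insert x W_AA" "insert x (insert y W_AA)"] cells_subset_ground
      C_eq cocircuit_subset by auto
  then have "r W_AA + 1 \<le> r (insert x (insert y W_AA))"
    using rank_insert_cocircuit[of W_AA x] cells_subset C_eq by simp
  ultimately show False using uncross_AA_BB by linarith
qed

lemma W_AB_nonempty: "W_AB \<noteq> {}" and W_BA_nonempty: "W_BA \<noteq> {}"
proof -
  have "r (insert z W_BB) = r W_BB + 1"
    using rank_insert_cocircuit[OF cells_subset(4)] C_eq by simp
  moreover have "insert z W_BB \<subseteq> E" using cells_subset_ground C_eq cocircuit_subset by auto
  ultimately have False if "3 \<le> r W_AA + 1" "3 \<le> r W_BB + 1"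
    using that rank_le_card[of W_AA] rank_le_card[of "insert z W_BB"] cells_subset_ground
      card_W_AA_le_1 by fastforce
  then show "W_AB \<noteq> {}" "W_BA \<noteq> {}"
    using rank_sides sep_x sep_y unfolding vertical_sep_def by auto
qed

lemma card_W_AB: "card W_AB = 1"
proof -
  have "\<not> 2 \<le> card W_AB"
  proof
    assume "2 \<le> card W_AB"
    then have "r E + 2 \<le> r W_AB + r (E - W_AB)"
      using rank_sum_ge_2 cells_subset_ground two_le_card_complements by simp
    moreover have "r E + 1 \<le> r W_BA + r (E - W_BA)"
      using rank_sum_ge_1[OF cells_subset_ground(3) W_BA_nonempty] two_le_card_complements(4)
      by fastforce
    ultimately show False using uncross_AB_BA by linarith
  qed
  moreover have "card W_AB \<noteq> 0"
    using W_AB_nonempty finite_subset_ground cells_subset_ground by auto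
  ultimately show ?thesis by linarith
qed

lemma card_W_BA: "card W_BA = 1"
proof -
  have "\<not> 2 \<le> card W_BA"
  proof
    assume "2 \<le> card W_BA"
    then have "r E + 2 \<le> r W_BA + r (E - W_BA)"
      using rank_sum_ge_2 cells_subset_ground two_le_card_complements by simp
    moreover have "r E + 1 \<le> r W_AB + r (E - W_AB)"
      using rank_sum_ge_1[OF cells_subset_ground(2) W_AB_nonempty] two_le_card_complements(3)
      by fastforce
    ultimately show False using uncross_AB_BA by linarith
  qed
  moreover have "card W_BA \<noteq> 0"
    using W_BA_nonempty finite_subset_ground cells_subset_ground by auto
  ultimately show ?thesis by linarith
qed

lemma W_BB_nonempty: "W_BB \<noteq> {}"
proof
  assume "W_BB = {}"
  then have "r Bx \<le> 2"
    using rank_sides(2) rank_le_card[of W_BA] card_W_BA cells_subset_ground by simp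
  then show False using sep_x unfolding vertical_sep_def by simp
qed

lemma W_AA_nonempty: "W_AA \<noteq> {}"
proof
  assume "W_AA = {}"
  then have "r Ax \<le> 2"
    using rank_sides(1) rank_le_card[of W_AB] card_W_AB cells_subset_ground by simp
  then show False using sep_x unfolding vertical_sep_def by simp
qed

lemma two_le_card_insert_W_BB: "2 \<le> card (insert z W_BB)"
proof -
  obtain w where "w \<in> W_BB" using W_BB_nonempty by blast
  then have "{z, w} \<subseteq> insert z W_BB" "z \<noteq> w"
    using cells_subset H_eq by auto
  then show ?thesis
    using card_mono[of "insert z W_BB" "{z, w}"] finite_subset_ground cells_subset_ground by auto
qed

lemma card_W_AA: "card W_AA = 1"
proof -
  have "0 < card W_AA"
    using W_AA_nonempty finite_subset_ground[OF cells_subset_ground(1)] by (simp add: card_gt_0_iff)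
  then show ?thesis using card_W_AA_le_1[OF two_le_card_insert_W_BB] by linarith
qed

lemma card_Ax_Int_H: "card (Ax \<inter> H) = 2"
proof -
  have "W_AA \<inter> W_AB = {}"
    using sides(4) unfolding W_AA_def W_AB_def H_eq by auto
  then show ?thesis
    using cells_Ax card_Un_disjoint[of W_AA W_AB] finite_subset_ground cells_subset_ground
      card_W_AA card_W_AB by simp
qed

lemma collinear_with_cell_point: "\<exists>w\<in>H. r {x, y, w} \<le> 2"
proof -
  obtain w where w: "W_AA = {w}" using card_W_AA card_1_singletonE by blast
  then have "w \<in> H" "w \<in> E" using cells_subset cells_subset_ground by auto
  have "r E + 2 \<le> r (insert z W_BB) + r (E - insert z W_BB)"
    using rank_sum_ge_2 two_le_card_insert_W_BB two_le_card_complements(1) cells_subset_ground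
      C_eq cocircuit_subset by simp
  moreover have "E - {w} \<noteq> {}" using two_le_card_complements(2) w by (metis card.empty not_numeral_le_zero)
  then have "r E + 1 \<le> r {w} + r (E - {w})"
    using rank_sum_ge_1[of "{w}"] \<open>w \<in> E\<close> by auto
  ultimately have "r {x, y, w} \<le> 2"
    using uncross_AA_BB w rank_singleton[OF \<open>w \<in> E\<close>] by simp
  then show ?thesis using \<open>w \<in> H\<close> by blast
qed

end

context rank3_cocircuit
begin

lemma triangle_separations:
  assumes "C = {x, y, z}" "vertical_sep x A B" "y \<in> A" "vertical_sep y A' B'" "x \<in> A'"
  shows "card (A \<inter> H) = 2" "\<exists>w\<in>H. r {x, y, w} \<le> 2"
proof -
  interpret crossing_separations E r C x y z A B A' B'
    by unfold_locales (use assms in auto)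
  show "card (A \<inter> H) = 2" "\<exists>w\<in>H. r {x, y, w} \<le> 2"
    using card_Ax_Int_H collinear_with_cell_point by auto
qed

section \<open>Elements of the cocircuit with vertical separations\<close>

lemma triangle_if_sides_avoid:
  assumes x: "x \<in> C" and y: "y \<in> C" and "x \<noteq> y"
    and sep_x: "vertical_sep x A B" and sep_y: "vertical_sep y A' B'"
    and "C - {y} \<subseteq> B" "C - {x} \<subseteq> B'"
  obtains z where "C = {x, y, z}"
proof -
  have "C - {y} \<subseteq> B \<inter> C" "C - {x} \<subseteq> B' \<inter> C" "B \<inter> C \<subseteq> E" "B' \<inter> C \<subseteq> E"
    using assms cocircuit_subset by auto
  then have "r (C - {y}) \<le> 2" "r (C - {x}) \<le> 2"
    using rank_mono[of "C - {y}" "B \<inter> C"] rank_mono[of "C - {x}" "B' \<inter> C"]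
      rank_sep_Int_cocircuit_le[OF x sep_x] rank_sep_Int_cocircuit_le[OF y sep_y] by auto
  moreover have "(C - {y}) \<union> (C - {x}) = C" "(C - {y}) \<inter> (C - {x}) = C - {x, y}"
    using \<open>x \<noteq> y\<close> by auto
  ultimately have "r (C - {x, y}) \<le> 1"
    using rank_submodular[of "C - {y}" "C - {x}"] cocircuit_subset rank_C by fastforce
  moreover have "C - {x, y} \<subseteq> E" using cocircuit_subset by auto
  ultimately have "card (C - {x, y}) \<le> 1" using card_le_1_if_rank_le_1 by blast
  moreover have "card (C - {x, y}) = card C - 2"
    using card_Diff_subset[of "{x, y}" C] x y \<open>x \<noteq> y\<close> finite_subset_ground cocircuit_subset by auto
  ultimately have "card (C - {x, y}) = 1" using three_le_card_C by linarith
  then obtain z where "C - {x, y} = {z}" by (rule card_1_singletonE)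
  then show thesis using that x y by auto
qed

lemma separated_pair_collinear:
  assumes x: "x \<in> C" and y: "y \<in> C" and "x \<noteq> y"
    and "vertical_sep x Ax Bx" and "vertical_sep y Ay By"
  shows "\<exists>w\<in>E. w \<noteq> x \<and> w \<noteq> y \<and> r {x, y, w} \<le> 2"
proof -
  obtain A B where sep_x: "vertical_sep x A B" and "y \<in> A"
    using vertical_sep_orient assms(4) y cocircuit_subset by blast
  obtain A' B' where sep_y: "vertical_sep y A' B'" and "x \<in> A'"
    using vertical_sep_orient assms(5) x cocircuit_subset by blast
  consider w where "w \<in> A \<inter> C" "w \<noteq> x" "w \<noteq> y" | w where "w \<in> A' \<inter> C" "w \<noteq> x" "w \<noteq> y"
    | "C - {y} \<subseteq> B" "C - {x} \<subseteq> B'"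
    using sep_x sep_y cocircuit_subset unfolding vertical_sep_def by blast
  then show ?thesis
  proof cases
    case (1 w)
    then show ?thesis
      using collinear_if_same_side[OF x sep_x, of y w] \<open>y \<in> A\<close> y cocircuit_subset by auto
  next
    case (2 w)
    then have "r {y, x, w} \<le> 2"
      using collinear_if_same_side[OF y sep_y, of x w] \<open>x \<in> A'\<close> x by auto
    then show ?thesis using 2 cocircuit_subset by (auto simp: insert_commute)
  next
    case 3
    then obtain z where C: "C = {x, y, z}"
      using triangle_if_sides_avoid[OF x y \<open>x \<noteq> y\<close> sep_x sep_y] by blast
    then obtain w where "w \<in> H" "r {x, y, w} \<le> 2"
      using triangle_separations(2)[OF C sep_x \<open>y \<in> A\<close> sep_y \<open>x \<in> A'\<close>] by blast
    then show ?thesis using H_def C by auto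
  qed
qed

text \<open>Two points \<open>x, w\<close> of \<open>C\<close> on a side of a separation of \<open>x\<close> away from \<open>y\<close>: the
  separation of \<open>y\<close> puts \<open>w\<close> on a side with \<open>x\<close>, with \<open>z\<close>, or opposite to both, and each
  case makes \<open>x, y, z\<close> collinear.\<close>
lemma sep_Int_cocircuit_subset:
  assumes x: "x \<in> C" and y: "y \<in> C" and z: "z \<in> C" and "2 < r {x, y, z}"
    and sep_x: "vertical_sep x A B" and "z \<in> A" and sep_y: "vertical_sep y Ay By"
  shows "A \<inter> C \<subseteq> {x, z}"
proof
  fix w assume w: "w \<in> A \<inter> C"
  have E: "x \<in> E" "y \<in> E" "z \<in> E" "w \<in> E" using x y z w cocircuit_subset by auto
  have xzw: "r {x, z, w} \<le> 2"
    using collinear_if_same_side[OF x sep_x, of z w] \<open>z \<in> A\<close> z w by auto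
  show "w \<in> {x, z}"
  proof (rule ccontr)
    assume "w \<notin> {x, z}"
    obtain P Q where sep: "vertical_sep y P Q" and "w \<in> P"
      using vertical_sep_orient[OF sep_y E(4)] by blast
    have "w \<noteq> x" "w \<noteq> z" using \<open>w \<notin> {x, z}\<close> by auto
    have "x \<in> P \<or> z \<in> P \<or> (x \<in> Q \<and> z \<in> Q)"
      using sep E(1,3) unfolding vertical_sep_def by blast
    then have "r {x, y, z} \<le> 2"
    proof (elim disjE conjE)
      assume "x \<in> P"
      then have yxw: "r {y, x, w} \<le> 2" using collinear_if_same_side[OF y sep, of x w] x w \<open>w \<in> P\<close> by blast
      show ?thesis
        by (rule rank_le_2_if_two_common[of "{x, z, w}" "{y, x, w}" x w]) (use yxw xzw E \<open>w \<noteq> x\<close> in auto)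
    next
      assume "z \<in> P"
      then have yzw: "r {y, z, w} \<le> 2" using collinear_if_same_side[OF y sep, of z w] z w \<open>w \<in> P\<close> by blast
      show ?thesis
        by (rule rank_le_2_if_two_common[of "{x, z, w}" "{y, z, w}" z w]) (use yzw xzw E \<open>w \<noteq> z\<close> in auto)
    next
      assume "x \<in> Q" "z \<in> Q"
      then have "r {y, x, z} \<le> 2"
        using collinear_if_same_side[OF y vertical_sep_sym[OF sep], of x z] x z by blast
      then show ?thesis by (simp add: insert_commute)
    qed
    then show False using \<open>2 < r {x, y, z}\<close> by simp
  qed
qed

lemma cocircuit_eq_if_separated:
  assumes x: "x \<in> C" and y: "y \<in> C" and z: "z \<in> C" and nc: "2 < r {x, y, z}"
    and "vertical_sep x Ax Bx" and sep_y: "vertical_sep y Ay By" and sep_z: "vertical_sep z Az Bz"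
  shows "C = {x, y, z}"
proof -
  obtain A B where sep_x: "vertical_sep x A B" and "y \<in> A"
    using vertical_sep_orient assms(5) y cocircuit_subset by blast
  have "z \<notin> A"
    using collinear_if_same_side[OF x sep_x, of y z] \<open>y \<in> A\<close> y z nc by auto
  then have "z \<in> B" using sep_x z cocircuit_subset unfolding vertical_sep_def by auto
  have "A \<inter> C \<subseteq> {x, y}"
    using sep_Int_cocircuit_subset[OF x z y _ sep_x \<open>y \<in> A\<close> sep_z] nc by (simp add: insert_commute)
  moreover have "B \<inter> C \<subseteq> {x, z}"
    using sep_Int_cocircuit_subset[OF x y z nc vertical_sep_sym[OF sep_x] \<open>z \<in> B\<close> sep_y] by simp
  moreover have "A \<union> B = E" using sep_x unfolding vertical_sep_def by auto
  ultimately show ?thesis using x y z cocircuit_subset by auto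
qed

lemma rank_ground_le_3_if_spanned:
  assumes "T \<subseteq> H" "\<forall>t\<in>T. r (insert t C) = r C" "card (H - T) \<le> 1"
  shows "r E \<le> 3"
proof -
  have CT: "r (C \<union> T) = 3"
    using rank_Un_eq_if_spanned[OF cocircuit_subset] assms(1,2) H_subset rank_C by auto
  have "finite (H - T)" using finite_subset_ground H_subset by auto
  with assms(3) consider "H - T = {}" | g where "H - T = {g}"
    by (metis One_nat_def card_1_singletonE card_eq_0_iff le_SucE le_zero_eq)
  then show ?thesis
  proof cases
    case 1
    then have "E = C \<union> T" using assms(1) cocircuit_subset unfolding H_def by auto
    then show ?thesis using CT by simp
  next
    case (2 g)
    then have "g \<in> E" "E - {g} = C \<union> T" using assms(1) cocircuit_subset unfolding H_def by auto
    moreover have "C \<noteq> {}" using three_le_card_C by auto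
    ultimately have "r E + 1 \<le> r {g} + r (C \<union> T)" using rank_sum_ge_1[of "{g}"] by auto
    then show ?thesis using CT rank_singleton[OF \<open>g \<in> E\<close>] by simp
  qed
qed

lemma no_common_point_off_triangle:
  assumes C: "C = {x, y, z}" and "w \<in> H" "r {x, y, w} \<le> 2" "r {x, z, w} \<le> 2"
  shows False
proof -
  have pts: "x \<in> E" "y \<in> E" "z \<in> E" "w \<in> E" "w \<noteq> x"
    using C cocircuit_subset H_subset assms(2) unfolding H_def by auto
  have "r {x, y, z} \<le> 2"
    by (rule rank_le_2_if_two_common[of "{x, y, w}" "{x, z, w}" x w]) (use assms pts in auto)
  then show False using C rank_C by simp
qed

text \<open>Each pair of \<open>C\<close> is collinear with its own point of \<open>H\<close>; these three points
  are distinct and spanned by \<open>C\<close>, but the separations leave only four points in \<open>H\<close>,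
  too few for \<open>r E \<ge> 4\<close>.\<close>
lemma triangle_not_all_separated:
  assumes C: "C = {x, y, z}" and "vertical_sep x Ax Bx" "vertical_sep y Ay By" "vertical_sep z Az Bz"
  shows False
proof -
  have E: "x \<in> E" "y \<in> E" "z \<in> E" using C cocircuit_subset by auto
  have C': "C = {x, z, y}" "C = {y, z, x}" "C = {y, x, z}" "C = {z, x, y}" using C by auto
  obtain A B where sep_x: "vertical_sep x A B" and "y \<in> A" using vertical_sep_orient assms(2) E by blast
  then have "z \<in> B" using triangle_sep_splits[OF C] by blast
  obtain P Q where "vertical_sep y P Q" "x \<in> P" using vertical_sep_orient assms(3) E by blast
  obtain P' Q' where "vertical_sep y P' Q'" "z \<in> P'" using vertical_sep_orient assms(3) E by blast
  obtain R S where "vertical_sep z R S" "x \<in> R" using vertical_sep_orient assms(4) E by blast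
  obtain R' S' where "vertical_sep z R' S'" "y \<in> R'" using vertical_sep_orient assms(4) E by blast
  have card_A: "card (A \<inter> H) = 2"
    and "\<exists>w\<in>H. r {x, y, w} \<le> 2"
    using triangle_separations[OF C sep_x \<open>y \<in> A\<close> \<open>vertical_sep y P Q\<close> \<open>x \<in> P\<close>] by auto
  then obtain w1 where w1: "w1 \<in> H" "r {x, y, w1} \<le> 2" by blast
  have card_B: "card (B \<inter> H) = 2"
    and "\<exists>w\<in>H. r {x, z, w} \<le> 2"
    using triangle_separations[OF C'(1) vertical_sep_sym[OF sep_x] \<open>z \<in> B\<close> \<open>vertical_sep z R S\<close> \<open>x \<in> R\<close>]
    by auto
  then obtain w2 where w2: "w2 \<in> H" "r {x, z, w2} \<le> 2" by blast
  obtain w3 where w3: "w3 \<in> H" "r {y, z, w3} \<le> 2"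
    using triangle_separations(2)[OF C'(2) \<open>vertical_sep y P' Q'\<close> \<open>z \<in> P'\<close> \<open>vertical_sep z R' S'\<close> \<open>y \<in> R'\<close>]
    by blast
  have "w1 \<noteq> w2" "w1 \<noteq> w3" "w2 \<noteq> w3"
    using no_common_point_off_triangle[OF C, of w1] no_common_point_off_triangle[OF C'(3), of w1]
      no_common_point_off_triangle[OF C'(4), of w2] w1 w2 w3 by (auto simp: insert_commute)
  then have card_T: "card {w1, w2, w3} = 3" by simp
  have "H = (A \<inter> H) \<union> (B \<inter> H)" using sep_x H_subset unfolding vertical_sep_def by auto
  then have "card H \<le> 4" using card_A card_B card_Un_le[of "A \<inter> H" "B \<inter> H"] by simp
  moreover have "{w1, w2, w3} \<subseteq> H" using w1 w2 w3 by auto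
  ultimately have "card (H - {w1, w2, w3}) \<le> 1"
    using card_T card_Diff_subset[of "{w1, w2, w3}" H] by simp
  moreover have "\<forall>t\<in>{w1, w2, w3}. r (insert t C) = r C"
    using rank_insert_eq_if_collinear[OF cocircuit_subset, of x y] w1 w2 w3 C H_subset
      rank_insert_eq_if_collinear[OF cocircuit_subset, of x z] triangle_distinct[OF C]
      rank_insert_eq_if_collinear[OF cocircuit_subset, of y z] by auto
  ultimately have "r E \<le> 3"
    using rank_ground_le_3_if_spanned \<open>{w1, w2, w3} \<subseteq> H\<close> by blast
  then show False using vertical_sep_rank_ground[OF sep_x] by simp
qed

lemma separated_triple_collinear:
  assumes "x \<in> C" "y \<in> C" "z \<in> C"
    and "vertical_sep x Ax Bx" "vertical_sep y Ay By" "vertical_sep z Az Bz"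
  shows "r {x, y, z} \<le> 2"
proof (rule ccontr)
  assume "\<not> r {x, y, z} \<le> 2"
  then have "C = {x, y, z}" using cocircuit_eq_if_separated assms by simp
  then show False using triangle_not_all_separated assms(4-6) by blast
qed


lemma vertical_sep_if_not_vert_contractible:
  assumes "e \<in> C" "\<not> vert_contractible E r e"
  obtains A B where "vertical_sep e A B"
  using not_vert_contractible_imp_vertical_sep assms cocircuit_subset by blast

lemma not_vert_contractible_collinear:
  assumes ab: "a \<in> C" "b \<in> C" "a \<noteq> b" "\<not> vert_contractible E r a" "\<not> vert_contractible E r b"
  shows "nontrivial_line E r (line a b)" "{e\<in>C. \<not> vert_contractible E r e} \<subseteq> line a b"
proof -
  obtain Aa Ba Ab Bb where sep_a: "vertical_sep a Aa Ba" and sep_b: "vertical_sep b Ab Bb"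
    using vertical_sep_if_not_vert_contractible ab by metis
  then obtain w where "w \<in> E" "w \<noteq> a" "w \<noteq> b" "r {a, b, w} \<le> 2"
    using separated_pair_collinear ab by blast
  then show "nontrivial_line E r (line a b)"
    using nontrivial_line_line ab cocircuit_subset by blast
  show "{e\<in>C. \<not> vert_contractible E r e} \<subseteq> line a b"
  proof
    fix e assume e: "e \<in> {e\<in>C. \<not> vert_contractible E r e}"
    then obtain Ae Be where "vertical_sep e Ae Be" using vertical_sep_if_not_vert_contractible by blast
    then have "r {a, b, e} \<le> 2" using separated_triple_collinear[OF ab(1,2) _ sep_a sep_b] e by blast
    then show "e \<in> line a b" using e cocircuit_subset unfolding line_def by auto
  qed
qed

lemma exists_vert_contractible: "\<exists>e\<in>C. vert_contractible E r e"
proof (rule ccontr)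
  assume none: "\<not> ?thesis"
  have "2 < r C" using rank_C by simp
  then obtain x y z where xyz: "x \<in> C" "y \<in> C" "z \<in> C" and "2 < r {x, y, z}"
    using obtain_noncollinear_triple[OF cocircuit_subset] by blast
  then obtain Ax Bx Ay By Az Bz
    where "vertical_sep x Ax Bx" "vertical_sep y Ay By" "vertical_sep z Az Bz"
    using vertical_sep_if_not_vert_contractible none by metis
  then have "r {x, y, z} \<le> 2" using separated_triple_collinear xyz by blast
  then show False using \<open>2 < r {x, y, z}\<close> by simp
qed

end

theorem proposition5p16:
  fixes E :: "'a set" and r :: "'a set \<Rightarrow> nat" and C :: "'a set"
  assumes "matroid E r"
    and "three_connected E r"
    and "simple E r"
    and "r E \<ge> 3"
    and "cocircuit E r C"
    and "r C = 3"
  shows "((\<exists>a\<in>C. \<exists>b\<in>C. a \<noteq> b \<and> \<not> vert_contractible E r a \<and> \<not> vert_contractible E r b)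
            \<longrightarrow> (\<exists>L. nontrivial_line E r L \<and> {e\<in>C. \<not> vert_contractible E r e} \<subseteq> L))
         \<and> (\<exists>e\<in>C. vert_contractible E r e)"
proof -
  \<comment> \<open>The hypothesis \<open>r E \<ge> 3\<close> is implied by \<open>r C = 3\<close> and not used.\<close>
  interpret rank3_cocircuit E r C
    using assms by unfold_locales auto
  show ?thesis
    using not_vert_contractible_collinear exists_vert_contractible by blast
qed

end
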